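(* Let $G$ be a cubical $\omega$-category with connections, $m\le n$, and $1\le i\le m-1$. Then, as operators on $G_n$, $\Phi_m\psi_i=\Phi_m$.
   Context: A cubical $\omega$-category with connections $G$ consists of sets $G_n$ ($n\ge0$), face maps $\partial^\alpha_i:G_n\to G_{n-1}$, degeneracies $\varepsilon_i:G_{n-1}\to G_n$, connections $\Gamma^\alpha_i:G_n\to G_{n+1}$ ($1\le i\le n$, $\alpha=\pm$) and partial compositions $\circ_j$ on $G_n$ ($1\le j\le n$, $a\circ_jb$ defined iff $\partial^+_ja=\partial^-_jb$) satisfying: $\partial^\alpha_i\partial^\beta_j=\partial^\beta_{j-1}\partial^\alpha_i$ ($i<j$), $\varepsilon_i\varepsilon_j=\varepsilon_{j+1}\varepsilon_i$ ($i\le j$), $\partial^\alpha_i\varepsilon_j=\varepsilon_{j-1}\partial^\alpha_i$ ($i<j$), $\varepsilon_j\partial^\alpha_{i-1}$ ($i>j$), $\mathrm{id}$ ($i=j$); $\Gamma^\alpha_i\Gamma^\beta_j=\Gamma^\beta_{j+1}\Gamma^\alpha_i$ ($i<j$), $\Gamma^\alpha_i\Gamma^\alpha_i=\Gamma^\alpha_{i+1}\Gamma^\alpha_i$, $\Gamma^\alpha_i\varepsilon_j=\varepsilon_{j+1}\Gamma^\alpha_i$ ($i<j$), $\varepsilon_j\Gamma^\alpha_{i-1}$ ($i>j$), $\Gamma^\alpha_j\varepsilon_j=\varepsilon_{j+1}\varepsilon_j$, $\partial^\alpha_i\Gamma^\beta_j=\Gamma^\beta_{j-1}\partial^\alpha_i$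 ($i<j$), $\Gamma^\beta_j\partial^\alpha_{i-1}$ ($i>j+1$), $\partial^\alpha_j\Gamma^\alpha_j=\partial^\alpha_{j+1}\Gamma^\alpha_j=\mathrm{id}$, $\partial^\alpha_j\Gamma^{-\alpha}_j=\partial^\alpha_{j+1}\Gamma^{-\alpha}_j=\varepsilon_j\partial^\alpha_j$; $\partial^-_j(a\circ_jb)=\partial^-_ja$, $\partial^+_j(a\circ_jb)=\partial^+_jb$, $\partial^\alpha_i(a\circ_jb)=\partial^\alpha_ia\circ_{j-1}\partial^\alpha_ib$ ($i<j$), $\partial^\alpha_ia\circ_j\partial^\alpha_ib$ ($i>j$); interchange for $i\ne j$; $\varepsilon_i(a\circ_jb)=\varepsilon_ia\circ_{j+1}\varepsilon_ib$ ($i\le j$), $\varepsilon_ia\circ_j\varepsilon_ib$ ($i>j$); $\Gamma^\alpha_i(a\circ_jb)=\Gamma^\alpha_ia\circ_{j+1}\Gamma^\alpha_ib$ ($i<j$), $\Gamma^\alpha_ia\circ_j\Gamma^\alpha_ib$ ($i>j$); $\Gamma^+_j(a\circ_jb)=(\Gamma^+_ja\circ_j\varepsilon_ja)\circ_{j+1}(\varepsilon_{j+1}a\circ_j\Gamma^+_jb)$, $\Gamma^-_j(a\circ_jb)=(\Gamma^-_ja\circ_j\varepsilon_{j+1}b)\circ_{j+1}(\varepsilon_jb\circ_j\Gamma^-_jb)$; each $\circ_j$ is a category structure with identities $\varepsilon_jy$; $\Gamma^+_ix\circ_i\Gamma^-_ix=\varepsilon_{i+1}x$, $\Gamma^+_ix\circ_{i+1}\Gamma^-_ix=\varepsilon_ix$.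 Folding operations on $G_n$: $\psi_ix=\Gamma^+_i\partial^-_{i+1}x\circ_{i+1}x\circ_{i+1}\Gamma^-_i\partial^+_{i+1}x$ ($1\le i\le n-1$), $\Psi_r=\psi_{r-1}\psi_{r-2}\cdots\psi_1$ ($1\le r\le n$), $\Phi_m=\Psi_1\Psi_2\cdots\Psi_m=\psi_1(\psi_2\psi_1)\cdots(\psi_{m-1}\cdots\psi_1)$ ($0\le m\le n$). *)

theory Defs
  imports Main
begin

text \<open>Conventions: the sign alpha is a bool, True = +, False = -.
  All operations carry the dimension of their (first) argument:
  face  n i a x   : partial face d^a_i : G_n -> G_(n-1), 1 <= i <= n
  degen n i x     : degeneracy eps_i : G_n -> G_(n+1), 1 <= i <= n+1
  conn  n i a x   : connection Gamma^a_i : G_n -> G_(n+1), 1 <= i <= n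
  comp  n j x y   : composition x o_j y in G_n, 1 <= j <= n,
                    defined iff face n j True x = face n j False y.\<close>

record 'a cubcat =
  cell  :: "nat \<Rightarrow> 'a set"
  face  :: "nat \<Rightarrow> nat \<Rightarrow> bool \<Rightarrow> 'a \<Rightarrow> 'a"
  degen :: "nat \<Rightarrow> nat \<Rightarrow> 'a \<Rightarrow> 'a"
  conn  :: "nat \<Rightarrow> nat \<Rightarrow> bool \<Rightarrow> 'a \<Rightarrow> 'a"
  comp  :: "nat \<Rightarrow> nat \<Rightarrow> 'a \<Rightarrow> 'a \<Rightarrow> 'a"

definition composable :: "'a cubcat \<Rightarrow> nat \<Rightarrow> nat \<Rightarrow> 'a \<Rightarrow> 'a \<Rightarrow> bool" where
  "composable G n j x y \<longleftrightarrow> x \<in> cell G n \<and> y \<in> cell G n \<and> 1 \<le> j \<and> j \<le> n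
     \<and> face G n j True x = face G n j False y"

definition cubical_omega_cat_conn :: "'a cubcat \<Rightarrow> bool" where
  "cubical_omega_cat_conn G \<longleftrightarrow>
   \<comment> \<open>closure of the operations\<close>
   (\<forall>n i a x. x \<in> cell G n \<and> 1 \<le> i \<and> i \<le> n \<longrightarrow> face G n i a x \<in> cell G (n - 1)) \<and>
   (\<forall>n i x. x \<in> cell G n \<and> 1 \<le> i \<and> i \<le> Suc n \<longrightarrow> degen G n i x \<in> cell G (Suc n)) \<and>
   (\<forall>n i a x. x \<in> cell G n \<and> 1 \<le> i \<and> i \<le> n \<longrightarrow> conn G n i a x \<in> cell G (Suc n)) \<and>
   (\<forall>n j x y. composable G n j x y \<longrightarrow> comp G n j x y \<in> cell G n) \<and>
   \<comment> \<open>d^a_i d^b_j = d^b_(j-1) d^a_i  (i < j)\<close>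
   (\<forall>n i j a b x. x \<in> cell G n \<and> 1 \<le> i \<and> i < j \<and> j \<le> n \<longrightarrow>
      face G (n - 1) i a (face G n j b x) = face G (n - 1) (j - 1) b (face G n i a x)) \<and>
   \<comment> \<open>eps_i eps_j = eps_(j+1) eps_i  (i <= j)\<close>
   (\<forall>n i j x. x \<in> cell G n \<and> 1 \<le> i \<and> i \<le> j \<and> j \<le> Suc n \<longrightarrow>
      degen G (Suc n) i (degen G n j x) = degen G (Suc n) (Suc j) (degen G n i x)) \<and>
   \<comment> \<open>d^a_i eps_j\<close>
   (\<forall>n i j a x. x \<in> cell G n \<and> 1 \<le> i \<and> i \<le> Suc n \<and> 1 \<le> j \<and> j \<le> Suc n \<longrightarrow>
      face G (Suc n) i a (degen G n j x) =
        (if i < j then degen G (n - 1) (j - 1) (face G n i a x)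
         else if j < i then degen G (n - 1) j (face G n (i - 1) a x)
         else x)) \<and>
   \<comment> \<open>Gamma^a_i Gamma^b_j = Gamma^b_(j+1) Gamma^a_i  (i < j)\<close>
   (\<forall>n i j a b x. x \<in> cell G n \<and> 1 \<le> i \<and> i < j \<and> j \<le> n \<longrightarrow>
      conn G (Suc n) i a (conn G n j b x) = conn G (Suc n) (Suc j) b (conn G n i a x)) \<and>
   \<comment> \<open>Gamma^a_i Gamma^a_i = Gamma^a_(i+1) Gamma^a_i\<close>
   (\<forall>n i a x. x \<in> cell G n \<and> 1 \<le> i \<and> i \<le> n \<longrightarrow>
      conn G (Suc n) i a (conn G n i a x) = conn G (Suc n) (Suc i) a (conn G n i a x)) \<and>
   \<comment> \<open>Gamma^a_i eps_j\<close>
   (\<forall>n i j a x. x \<in> cell G n \<and> 1 \<le> i \<and> i \<le> Suc n \<and> 1 \<le> j \<and> j \<le> Suc n \<longrightarrow>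
      conn G (Suc n) i a (degen G n j x) =
        (if i < j then degen G (Suc n) (Suc j) (conn G n i a x)
         else if j < i then degen G (Suc n) j (conn G n (i - 1) a x)
         else degen G (Suc n) (Suc j) (degen G n j x))) \<and>
   \<comment> \<open>d^a_i Gamma^b_j\<close>
   (\<forall>n i j a b x. x \<in> cell G n \<and> 1 \<le> j \<and> j \<le> n \<and> 1 \<le> i \<and> i \<le> Suc n \<longrightarrow>
      face G (Suc n) i a (conn G n j b x) =
        (if i < j then conn G (n - 1) (j - 1) b (face G n i a x)
         else if Suc j < i then conn G (n - 1) j b (face G n (i - 1) a x)
         else if a = b then x
         else degen G (n - 1) j (face G n j a x))) \<and>
   \<comment> \<open>faces of composites\<close>
   (\<forall>n j x y. composable G n j x y \<longrightarrow>
      face G n j False (comp G n j x y) = face G n j False x \<and>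
      face G n j True (comp G n j x y) = face G n j True y) \<and>
   (\<forall>n i j a x y. composable G n j x y \<and> 1 \<le> i \<and> i \<le> n \<and> i \<noteq> j \<longrightarrow>
      face G n i a (comp G n j x y) =
        (if i < j then comp G (n - 1) (j - 1) (face G n i a x) (face G n i a y)
         else comp G (n - 1) j (face G n i a x) (face G n i a y))) \<and>
   \<comment> \<open>interchange law\<close>
   (\<forall>n i j x y z w. i \<noteq> j \<and> composable G n i x y \<and> composable G n i z w
      \<and> composable G n j x z \<and> composable G n j y w \<longrightarrow>
      comp G n j (comp G n i x y) (comp G n i z w) = comp G n i (comp G n j x z) (comp G n j y w)) \<and>
   \<comment> \<open>degeneracies of composites\<close>
   (\<forall>n i j x y. composable G n j x y \<and> 1 \<le> i \<and> i \<le> Suc n \<longrightarrow>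
      degen G n i (comp G n j x y) =
        (if i \<le> j then comp G (Suc n) (Suc j) (degen G n i x) (degen G n i y)
         else comp G (Suc n) j (degen G n i x) (degen G n i y))) \<and>
   \<comment> \<open>connections of composites, i \<noteq> j\<close>
   (\<forall>n i j a x y. composable G n j x y \<and> 1 \<le> i \<and> i \<le> n \<and> i \<noteq> j \<longrightarrow>
      conn G n i a (comp G n j x y) =
        (if i < j then comp G (Suc n) (Suc j) (conn G n i a x) (conn G n i a y)
         else comp G (Suc n) j (conn G n i a x) (conn G n i a y))) \<and>
   \<comment> \<open>connections of composites, i = j\<close>
   (\<forall>n j x y. composable G n j x y \<longrightarrow>
      conn G n j True (comp G n j x y) =
        comp G (Suc n) (Suc j)
          (comp G (Suc n) j (conn G n j True x) (degen G n j x))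
          (comp G (Suc n) j (degen G n (Suc j) x) (conn G n j True y)) \<and>
      conn G n j False (comp G n j x y) =
        comp G (Suc n) (Suc j)
          (comp G (Suc n) j (conn G n j False x) (degen G n (Suc j) y))
          (comp G (Suc n) j (degen G n j y) (conn G n j False y))) \<and>
   \<comment> \<open>each o_j is a category structure with identities eps_j y\<close>
   (\<forall>n j x y z. composable G n j x y \<and> composable G n j y z \<longrightarrow>
      comp G n j (comp G n j x y) z = comp G n j x (comp G n j y z)) \<and>
   (\<forall>n j x. x \<in> cell G n \<and> 1 \<le> j \<and> j \<le> n \<longrightarrow>
      comp G n j (degen G (n - 1) j (face G n j False x)) x = x \<and>
      comp G n j x (degen G (n - 1) j (face G n j True x)) = x) \<and>
   \<comment> \<open>cancellation laws for connections\<close>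
   (\<forall>n i x. x \<in> cell G n \<and> 1 \<le> i \<and> i \<le> n \<longrightarrow>
      comp G (Suc n) i (conn G n i True x) (conn G n i False x) = degen G n (Suc i) x \<and>
      comp G (Suc n) (Suc i) (conn G n i True x) (conn G n i False x) = degen G n i x)"

definition psi :: "'a cubcat \<Rightarrow> nat \<Rightarrow> nat \<Rightarrow> 'a \<Rightarrow> 'a" where
  "psi G n i x =
     comp G n (Suc i)
       (comp G n (Suc i) (conn G (n - 1) i True (face G n (Suc i) False x)) x)
       (conn G (n - 1) i False (face G n (Suc i) True x))"

text \<open>Psi_r = psi_(r-1) ... psi_1 (psi_1 applied first); Psi_1 = id.\<close>
fun Psi :: "'a cubcat \<Rightarrow> nat \<Rightarrow> nat \<Rightarrow> 'a \<Rightarrow> 'a" where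
  "Psi G n 0 x = x"
| "Psi G n (Suc r) x = (if r = 0 then x else psi G n r (Psi G n r x))"

text \<open>Phi_m = Psi_1 Psi_2 ... Psi_m (Psi_m applied first); Phi_0 = id.\<close>
fun Phi :: "'a cubcat \<Rightarrow> nat \<Rightarrow> nat \<Rightarrow> 'a \<Rightarrow> 'a" where
  "Phi G n 0 x = x"
| "Phi G n (Suc m) x = Phi G n m (Psi G n (Suc m) x)"

end

theory Submission
  imports Defs
begin

text \<open>
  The proof rests on three relations between the folding operations on G_n:
  psi_i psi_i = psi_i, psi_i psi_k = psi_k psi_i for |i - k| >= 2, and
  psi_j psi_(j+1) psi_j psi_(j+1) = psi_j psi_(j+1) psi_j.
  Given these, Phi_m psi_i = Phi_m follows by induction on m, writing Phi_m = Phi_(m-1) Psi_m.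
  For i = 1, psi_1 is absorbed by Psi_m through idempotence. For i = j + 1, move psi_i past
  psi_1, ..., psi_(j-1); since psi_j commutes with psi_(i+1), ..., psi_(m-1) and
  Phi_(m-1) psi_j = Phi_(m-1) by induction, a psi_j may be put in front of psi_i psi_j psi_i,
  the third relation shortens the word to psi_j psi_i psi_j, and removing the leading psi_j
  again leaves Psi_m.

  For the third relation both sides are decomposed in direction j + 2 into the same composite
  of five cells. This uses that psi_j distributes over o_k for k >= j + 2, and an explicit
  formula for psi_j Gamma^+_(j+1) psi_j c, whose Gamma^- counterpart follows by duality.
\<close>

(* The axioms of cubical_omega_cat_conn in rule form; the explicit binders reproduce the
   quantifier order of the definition, so that cubical_cat_iff is a mere normalisation. *)
locale cubical_cat =
  fixes G :: "'a cubcat"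
  assumes face_cell: "\<And>n i a x. x \<in> cell G n \<Longrightarrow> 1 \<le> i \<Longrightarrow> i \<le> n \<Longrightarrow>
      face G n i a x \<in> cell G (n - 1)"
    and degen_cell [simp]: "\<And>n i x. x \<in> cell G n \<Longrightarrow> 1 \<le> i \<Longrightarrow> i \<le> Suc n \<Longrightarrow>
      degen G n i x \<in> cell G (Suc n)"
    and conn_cell [simp]: "\<And>n i a x. x \<in> cell G n \<Longrightarrow> 1 \<le> i \<Longrightarrow> i \<le> n \<Longrightarrow>
      conn G n i a x \<in> cell G (Suc n)"
    and comp_cell: "\<And>n j x y. composable G n j x y \<Longrightarrow> comp G n j x y \<in> cell G n"
    and face_face: "\<And>n i j a b x. x \<in> cell G n \<Longrightarrow> 1 \<le> i \<Longrightarrow> i < j \<Longrightarrow> j \<le> n \<Longrightarrow>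
      face G (n - 1) i a (face G n j b x) = face G (n - 1) (j - 1) b (face G n i a x)"
    and degen_degen: "\<And>n i j x. x \<in> cell G n \<Longrightarrow> 1 \<le> i \<Longrightarrow> i \<le> j \<Longrightarrow> j \<le> Suc n \<Longrightarrow>
      degen G (Suc n) i (degen G n j x) = degen G (Suc n) (Suc j) (degen G n i x)"
    and face_degen: "\<And>n i j a x. x \<in> cell G n \<Longrightarrow> 1 \<le> i \<Longrightarrow> i \<le> Suc n \<Longrightarrow>
      1 \<le> j \<Longrightarrow> j \<le> Suc n \<Longrightarrow>
      face G (Suc n) i a (degen G n j x) =
        (if i < j then degen G (n - 1) (j - 1) (face G n i a x)
         else if j < i then degen G (n - 1) j (face G n (i - 1) a x)
         else x)"
    and conn_conn: "\<And>n i j a b x. x \<in> cell G n \<Longrightarrow> 1 \<le> i \<Longrightarrow> i < j \<Longrightarrow> j \<le> n \<Longrightarrow>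
      conn G (Suc n) i a (conn G n j b x) = conn G (Suc n) (Suc j) b (conn G n i a x)"
    and conn_conn_same: "\<And>n i a x. x \<in> cell G n \<Longrightarrow> 1 \<le> i \<Longrightarrow> i \<le> n \<Longrightarrow>
      conn G (Suc n) i a (conn G n i a x) = conn G (Suc n) (Suc i) a (conn G n i a x)"
    and conn_degen: "\<And>n i j a x. x \<in> cell G n \<Longrightarrow> 1 \<le> i \<Longrightarrow> i \<le> Suc n \<Longrightarrow>
      1 \<le> j \<Longrightarrow> j \<le> Suc n \<Longrightarrow>
      conn G (Suc n) i a (degen G n j x) =
        (if i < j then degen G (Suc n) (Suc j) (conn G n i a x)
         else if j < i then degen G (Suc n) j (conn G n (i - 1) a x)
         else degen G (Suc n) (Suc j) (degen G n j x))"
    and face_conn: "\<And>n i j a b x. x \<in> cell G n \<Longrightarrow> 1 \<le> j \<Longrightarrow> j \<le> n \<Longrightarrow>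
      1 \<le> i \<Longrightarrow> i \<le> Suc n \<Longrightarrow>
      face G (Suc n) i a (conn G n j b x) =
        (if i < j then conn G (n - 1) (j - 1) b (face G n i a x)
         else if Suc j < i then conn G (n - 1) j b (face G n (i - 1) a x)
         else if a = b then x
         else degen G (n - 1) j (face G n j a x))"
    and face_comp_same: "\<And>n j x y. composable G n j x y \<Longrightarrow>
      face G n j False (comp G n j x y) = face G n j False x \<and>
      face G n j True (comp G n j x y) = face G n j True y"
    and face_comp: "\<And>n i j a x y. composable G n j x y \<Longrightarrow> 1 \<le> i \<Longrightarrow> i \<le> n \<Longrightarrow> i \<noteq> j \<Longrightarrow>
      face G n i a (comp G n j x y) =
        (if i < j then comp G (n - 1) (j - 1) (face G n i a x) (face G n i a y)
         else comp G (n - 1) j (face G n i a x) (face G n i a y))"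
    and interchange: "\<And>n i j x y z w. i \<noteq> j \<Longrightarrow>
      composable G n i x y \<Longrightarrow> composable G n i z w \<Longrightarrow>
      composable G n j x z \<Longrightarrow> composable G n j y w \<Longrightarrow>
      comp G n j (comp G n i x y) (comp G n i z w) = comp G n i (comp G n j x z) (comp G n j y w)"
    and degen_comp: "\<And>n i j x y. composable G n j x y \<Longrightarrow> 1 \<le> i \<Longrightarrow> i \<le> Suc n \<Longrightarrow>
      degen G n i (comp G n j x y) =
        (if i \<le> j then comp G (Suc n) (Suc j) (degen G n i x) (degen G n i y)
         else comp G (Suc n) j (degen G n i x) (degen G n i y))"
    and conn_comp: "\<And>n i j a x y. composable G n j x y \<Longrightarrow> 1 \<le> i \<Longrightarrow> i \<le> n \<Longrightarrow> i \<noteq> j \<Longrightarrow>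
      conn G n i a (comp G n j x y) =
        (if i < j then comp G (Suc n) (Suc j) (conn G n i a x) (conn G n i a y)
         else comp G (Suc n) j (conn G n i a x) (conn G n i a y))"
    and conn_comp_same: "\<And>n j x y. composable G n j x y \<Longrightarrow>
      conn G n j True (comp G n j x y) =
        comp G (Suc n) (Suc j)
          (comp G (Suc n) j (conn G n j True x) (degen G n j x))
          (comp G (Suc n) j (degen G n (Suc j) x) (conn G n j True y)) \<and>
      conn G n j False (comp G n j x y) =
        comp G (Suc n) (Suc j)
          (comp G (Suc n) j (conn G n j False x) (degen G n (Suc j) y))
          (comp G (Suc n) j (degen G n j y) (conn G n j False y))"
    and comp_assoc: "\<And>n j x y z. composable G n j x y \<Longrightarrow> composable G n j y z \<Longrightarrow>
      comp G n j (comp G n j x y) z = comp G n j x (comp G n j y z)"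
    and comp_units: "\<And>n j x. x \<in> cell G n \<Longrightarrow> 1 \<le> j \<Longrightarrow> j \<le> n \<Longrightarrow>
      comp G n j (degen G (n - 1) j (face G n j False x)) x = x \<and>
      comp G n j x (degen G (n - 1) j (face G n j True x)) = x"
    and conn_cancel: "\<And>n i x. x \<in> cell G n \<Longrightarrow> 1 \<le> i \<Longrightarrow> i \<le> n \<Longrightarrow>
      comp G (Suc n) i (conn G n i True x) (conn G n i False x) = degen G n (Suc i) x \<and>
      comp G (Suc n) (Suc i) (conn G n i True x) (conn G n i False x) = degen G n i x"

lemma cubical_cat_iff: "cubical_cat G \<longleftrightarrow> cubical_omega_cat_conn G"
  unfolding cubical_cat_def cubical_omega_cat_conn_def by (simp only: imp_conjL conj_assoc)

(* Exchanging the signs of faces and connections and reversing all compositions gives again a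
   cubical omega-category with connections; it turns facts about Gamma^+ into facts about Gamma^-. *)
definition dual :: "'a cubcat \<Rightarrow> 'a cubcat" where
  "dual G = G\<lparr>face := (\<lambda>n i a. face G n i (\<not> a)), conn := (\<lambda>n i a. conn G n i (\<not> a)),
     comp := (\<lambda>n j x y. comp G n j y x)\<rparr>"

lemma dual_simps [simp]:
  "cell (dual G) = cell G" "face (dual G) n i a = face G n i (\<not> a)" "degen (dual G) = degen G"
  "conn (dual G) n i a = conn G n i (\<not> a)" "comp (dual G) n j x y = comp G n j y x"
  by (simp_all add: dual_def)

lemma composable_dual [simp]: "composable (dual G) n j x y \<longleftrightarrow> composable G n j y x"
  by (auto simp: composable_def)

context cubical_cat
begin

(* One_nat_def would turn the n - 1 of the goals into n - Suc 0, but not that of the axioms. *)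
lemma cubical_cat_dual: "cubical_cat (dual G)"
  by unfold_locales
    (simp_all del: One_nat_def add: face_cell degen_cell conn_cell comp_cell face_face degen_degen
      face_degen conn_conn conn_conn_same conn_degen face_conn face_comp_same face_comp degen_comp
      conn_comp comp_units conn_cancel interchange comp_assoc conn_comp_same)

(* Instances of the axioms with the dimension written as a successor, which avoids the truncated
   n - 1 and makes them usable as rewrite rules. *)
lemma face_cell_Suc [simp]:
  "x \<in> cell G (Suc n) \<Longrightarrow> 1 \<le> i \<Longrightarrow> i \<le> Suc n \<Longrightarrow> face G (Suc n) i a x \<in> cell G n"
  using face_cell[of x "Suc n" i a] by simp

lemma face_face_Suc:
  "x \<in> cell G (Suc (Suc n)) \<Longrightarrow> 1 \<le> i \<Longrightarrow> i < j \<Longrightarrow> j \<le> Suc (Suc n) \<Longrightarrow>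
   face G (Suc n) i a (face G (Suc (Suc n)) j b x) = face G (Suc n) (j - 1) b (face G (Suc (Suc n)) i a x)"
  using face_face[of x "Suc (Suc n)" i j a b] by simp

lemma face_degen_Suc:
  "x \<in> cell G (Suc n) \<Longrightarrow> 1 \<le> i \<Longrightarrow> i \<le> Suc (Suc n) \<Longrightarrow> 1 \<le> j \<Longrightarrow> j \<le> Suc (Suc n) \<Longrightarrow>
   face G (Suc (Suc n)) i a (degen G (Suc n) j x) =
     (if i < j then degen G n (j - 1) (face G (Suc n) i a x)
      else if j < i then degen G n j (face G (Suc n) (i - 1) a x)
      else x)"
  using face_degen[of x "Suc n" i j a] by simp

lemma face_conn_Suc:
  "x \<in> cell G (Suc n) \<Longrightarrow> 1 \<le> j \<Longrightarrow> j \<le> Suc n \<Longrightarrow> 1 \<le> i \<Longrightarrow> i \<le> Suc (Suc n) \<Longrightarrow>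
   face G (Suc (Suc n)) i a (conn G (Suc n) j b x) =
     (if i < j then conn G n (j - 1) b (face G (Suc n) i a x)
      else if Suc j < i then conn G n j b (face G (Suc n) (i - 1) a x)
      else if a = b then x
      else degen G n j (face G (Suc n) j a x))"
  using face_conn[of x "Suc n" j i a b] by simp

lemma face_comp_Suc:
  "composable G (Suc n) j x y \<Longrightarrow> 1 \<le> i \<Longrightarrow> i \<le> Suc n \<Longrightarrow> i \<noteq> j \<Longrightarrow>
   face G (Suc n) i a (comp G (Suc n) j x y) =
     (if i < j then comp G n (j - 1) (face G (Suc n) i a x) (face G (Suc n) i a y)
      else comp G n j (face G (Suc n) i a x) (face G (Suc n) i a y))"
  using face_comp[of "Suc n" j x y i a] by simp

lemmas cubical_simps = face_face_Suc face_degen_Suc face_conn_Suc face_comp_Suc comp_cell composable_def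

lemma face_degen_same [simp]:
  "x \<in> cell G n \<Longrightarrow> 1 \<le> j \<Longrightarrow> j \<le> Suc n \<Longrightarrow> face G (Suc n) j a (degen G n j x) = x"
  using face_degen[of x n j j a] by simp

lemma face_conn_same [simp]:
  "x \<in> cell G n \<Longrightarrow> 1 \<le> j \<Longrightarrow> j \<le> n \<Longrightarrow> face G (Suc n) j a (conn G n j a x) = x"
  "x \<in> cell G n \<Longrightarrow> 1 \<le> j \<Longrightarrow> j \<le> n \<Longrightarrow> face G (Suc n) (Suc j) a (conn G n j a x) = x"
  using face_conn[of x n j j a a] face_conn[of x n j "Suc j" a a] by simp_all

lemma face_comp_source [simp]:
  "composable G n j x y \<Longrightarrow> face G n j False (comp G n j x y) = face G n j False x"
  using face_comp_same by blast

lemma face_comp_target [simp]: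
  "composable G n j x y \<Longrightarrow> face G n j True (comp G n j x y) = face G n j True y"
  using face_comp_same by blast

lemma comp_degen_left:
  "x \<in> cell G (Suc n) \<Longrightarrow> 1 \<le> j \<Longrightarrow> j \<le> Suc n \<Longrightarrow> y = face G (Suc n) j False x \<Longrightarrow>
   comp G (Suc n) j (degen G n j y) x = x"
  using comp_units[of x "Suc n" j] by simp

lemma comp_degen_right:
  "x \<in> cell G (Suc n) \<Longrightarrow> 1 \<le> j \<Longrightarrow> j \<le> Suc n \<Longrightarrow> y = face G (Suc n) j True x \<Longrightarrow>
   comp G (Suc n) j x (degen G n j y) = x"
  using comp_units[of x "Suc n" j] by simp

lemma composable_comp_left:
  "composable G n j x y \<Longrightarrow> composable G n j y z \<Longrightarrow> composable G n j (comp G n j x y) z"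
  using comp_cell[of n j x y] by (auto simp: composable_def)

lemma composable_comp_right:
  "composable G n j x y \<Longrightarrow> composable G n j y z \<Longrightarrow> composable G n j x (comp G n j y z)"
  using comp_cell[of n j y z] by (auto simp: composable_def)

lemma conn_degen_same:
  "x \<in> cell G n \<Longrightarrow> 1 \<le> j \<Longrightarrow> j \<le> Suc n \<Longrightarrow>
   conn G (Suc n) j a (degen G n j x) = degen G (Suc n) (Suc j) (degen G n j x)"
  using conn_degen[of x n j j a] by simp

section \<open>Folding operations\<close>

lemma psi_Suc:
  "psi G (Suc n) i x = comp G (Suc n) (Suc i)
     (comp G (Suc n) (Suc i) (conn G n i True (face G (Suc n) (Suc i) False x)) x)
     (conn G n i False (face G (Suc n) (Suc i) True x))"
  by (simp add: psi_def)

lemma psi_cell [simp]: "x \<in> cell G n \<Longrightarrow> 1 \<le> i \<Longrightarrow> i < n \<Longrightarrow> psi G n i x \<in> cell G n"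
  by (cases n) (auto simp: psi_Suc cubical_simps)

lemma face_psi_Suc:
  "x \<in> cell G (Suc (Suc m)) \<Longrightarrow> 1 \<le> i \<Longrightarrow> i \<le> Suc m \<Longrightarrow>
   face G (Suc (Suc m)) (Suc i) a (psi G (Suc (Suc m)) i x) =
   degen G m i (face G (Suc m) i a (face G (Suc (Suc m)) (Suc i) a x))"
  by (cases a) (simp_all add: psi_Suc cubical_simps)

lemma face_psi_above:
  "x \<in> cell G (Suc (Suc m)) \<Longrightarrow> 1 \<le> i \<Longrightarrow> Suc (Suc i) \<le> k \<Longrightarrow> k \<le> Suc (Suc m) \<Longrightarrow>
   face G (Suc (Suc m)) k a (psi G (Suc (Suc m)) i x) = psi G (Suc m) i (face G (Suc (Suc m)) k a x)"
  by (simp add: psi_Suc cubical_simps)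

(* The (i+1)-faces of psi_i x are epsilon_i-degenerate, so the connections that psi_i folds
   onto them are identities for o_(i+1). *)
lemma psi_idem:
  assumes x: "x \<in> cell G n" and i: "1 \<le> i" "i < n"
  shows "psi G n i (psi G n i x) = psi G n i x"
proof -
  define m where "m = n - 2"
  have n: "n = Suc (Suc m)" and im: "i \<le> Suc m" using i by (simp_all add: m_def)
  let ?N = "Suc (Suc m)"
  let ?y = "psi G ?N i x"
  have x': "x \<in> cell G ?N" using x n by simp
  have y: "?y \<in> cell G ?N" using x' i im by simp
  have conn_face: "conn G (Suc m) i a (face G ?N (Suc i) b ?y) = degen G (Suc m) (Suc i) (face G ?N (Suc i) b ?y)"
    for a b
    using x' i im unfolding face_psi_Suc[OF x' i(1) im] by (simp add: conn_degen_same)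
  have "psi G ?N i ?y = comp G ?N (Suc i)
      (comp G ?N (Suc i) (degen G (Suc m) (Suc i) (face G ?N (Suc i) False ?y)) ?y)
      (degen G (Suc m) (Suc i) (face G ?N (Suc i) True ?y))"
    unfolding psi_Suc[of "Suc m" i ?y] conn_face ..
  also have "\<dots> = ?y"
    using y i im by (simp add: comp_degen_left comp_degen_right)
  finally show ?thesis unfolding n .
qed

lemma psi_comp_above:
  assumes uv: "composable G (Suc (Suc n)) (Suc k) u v" and i: "1 \<le> i" "Suc i \<le> k"
  shows "psi G (Suc (Suc n)) i (comp G (Suc (Suc n)) (Suc k) u v) =
         comp G (Suc (Suc n)) (Suc k) (psi G (Suc (Suc n)) i u) (psi G (Suc (Suc n)) i v)"
proof -
  let ?N = "Suc (Suc n)"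
  have u: "u \<in> cell G ?N" and v: "v \<in> cell G ?N" and k: "k \<le> Suc n"
    and uv_face: "face G ?N (Suc k) True u = face G ?N (Suc k) False v"
    using uv by (auto simp: composable_def)
  define p where "p a = face G ?N (Suc i) a u" for a
  define q where "q a = face G ?N (Suc i) a v" for a
  have pq: "composable G (Suc n) k (p a) (q a)" for a
    using arg_cong[OF uv_face, of "face G (Suc n) (Suc i) a"] u v i k by (simp add: cubical_simps p_def q_def)
  have face_uv: "face G ?N (Suc i) a (comp G ?N (Suc k) u v) = comp G (Suc n) k (p a) (q a)" for a
    using uv i k by (simp add: face_comp_Suc p_def q_def)
  have conn_pq: "conn G (Suc n) i b (comp G (Suc n) k (p a) (q a)) =
      comp G ?N (Suc k) (conn G (Suc n) i b (p a)) (conn G (Suc n) i b (q a))" for a b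
    using conn_comp[OF pq[of a], of i b] i k by simp
  have conn_pq_comp: "composable G ?N (Suc k) (conn G (Suc n) i b (p a)) (conn G (Suc n) i b (q a))" for a b
    using pq[of a] i k by (simp add: cubical_simps)
  have conn_u: "composable G ?N (Suc i) (conn G (Suc n) i True (p False)) u"
    and conn_v: "composable G ?N (Suc i) (conn G (Suc n) i True (q False)) v"
    using u v i k by (simp_all add: cubical_simps p_def q_def)
  have conn_u_conn: "composable G ?N (Suc i) (comp G ?N (Suc i) (conn G (Suc n) i True (p False)) u)
      (conn G (Suc n) i False (p True))"
    and conn_v_conn: "composable G ?N (Suc i) (comp G ?N (Suc i) (conn G (Suc n) i True (q False)) v)
      (conn G (Suc n) i False (q True))"
    using conn_u conn_v u v i k by (simp_all add: cubical_simps p_def q_def)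
  have halves: "composable G ?N (Suc k) (comp G ?N (Suc i) (conn G (Suc n) i True (p False)) u)
      (comp G ?N (Suc i) (conn G (Suc n) i True (q False)) v)"
    using conn_u conn_v pq uv_face u v i k by (simp add: cubical_simps p_def q_def)
  have "comp G ?N (Suc i) (comp G ?N (Suc k) (conn G (Suc n) i True (p False)) (conn G (Suc n) i True (q False)))
      (comp G ?N (Suc k) u v)
    = comp G ?N (Suc k) (comp G ?N (Suc i) (conn G (Suc n) i True (p False)) u)
      (comp G ?N (Suc i) (conn G (Suc n) i True (q False)) v)"
    by (rule interchange) (use conn_pq_comp uv conn_u conn_v i in auto)
  then show ?thesis
    unfolding psi_Suc face_uv conn_pq p_def[symmetric] q_def[symmetric]
    by (metis interchange conn_pq_comp conn_u_conn conn_v_conn halves Suc_n_not_le_n i(2))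
qed

lemma psi_conn_above:
  assumes c: "c \<in> cell G (Suc p)" and ab: "1 \<le> a" "Suc a \<le> b" "Suc b \<le> Suc p"
  shows "psi G (Suc (Suc p)) a (conn G (Suc p) (Suc b) t c) = conn G (Suc p) (Suc b) t (psi G (Suc p) a c)"
proof -
  have "conn G (Suc p) a s (conn G p b t w) = conn G (Suc p) (Suc b) t (conn G p a s w)"
    if "w \<in> cell G p" for w s
    using conn_conn[OF that, of a b s t] ab by simp
  then show ?thesis
    using c ab by (simp add: psi_Suc cubical_simps conn_comp)
qed

lemma psi_commute:
  assumes x: "x \<in> cell G n" and ab: "1 \<le> a" "Suc (Suc a) \<le> b" "b < n"
  shows "psi G n a (psi G n b x) = psi G n b (psi G n a x)"
proof -
  define p where "p = n - 2"
  have n: "n = Suc (Suc p)" and bp: "b \<le> Suc p" using ab by (simp_all add: p_def)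
  let ?N = "Suc (Suc p)"
  have x': "x \<in> cell G ?N" using x n by simp
  define c where "c t = face G ?N (Suc b) t x" for t
  have c_cell: "c t \<in> cell G (Suc p)" for t using x' ab bp by (simp add: c_def)
  obtain b' where b': "b = Suc b'" using ab by (cases b) auto
  have psi_b: "psi G ?N b x = comp G ?N (Suc b)
      (comp G ?N (Suc b) (conn G (Suc p) b True (c False)) x) (conn G (Suc p) b False (c True))"
    by (simp add: psi_Suc c_def)
  have psi_b_psi_a: "psi G ?N b (psi G ?N a x) = comp G ?N (Suc b)
      (comp G ?N (Suc b) (conn G (Suc p) b True (psi G (Suc p) a (c False))) (psi G ?N a x))
      (conn G (Suc p) b False (psi G (Suc p) a (c True)))"
    using x' ab bp by (simp add: psi_Suc[of _ b] c_def face_psi_above)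
  have k1: "composable G ?N (Suc b) (conn G (Suc p) b True (c False)) x"
    using x' ab bp by (simp add: cubical_simps c_def)
  have k2: "composable G ?N (Suc b) (comp G ?N (Suc b) (conn G (Suc p) b True (c False)) x)
      (conn G (Suc p) b False (c True))"
    using x' ab bp k1 by (simp add: cubical_simps c_def)
  have psi_conn: "psi G ?N a (conn G (Suc p) b t (c s)) = conn G (Suc p) b t (psi G (Suc p) a (c s))" for t s
    using psi_conn_above[OF c_cell[of s], of a b' t] ab bp b' by simp
  have ab': "Suc a \<le> b" using ab by simp
  show ?thesis
    unfolding n psi_b psi_b_psi_a psi_comp_above[OF k2 ab(1) ab'] psi_comp_above[OF k1 ab(1) ab']
    by (simp add: psi_conn)
qed

lemma psi_degen_Suc:
  assumes w: "w \<in> cell G (Suc m)" and j: "1 \<le> j" "j \<le> Suc m"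
  shows "psi G (Suc (Suc m)) j (degen G (Suc m) (Suc j) w) = degen G (Suc m) j w"
proof -
  have "comp G (Suc (Suc m)) (Suc j) (conn G (Suc m) j True w) (degen G (Suc m) (Suc j) w) = conn G (Suc m) j True w"
    by (rule comp_degen_right) (use w j in \<open>simp_all add: cubical_simps\<close>)
  then show ?thesis
    using w j conn_cancel[OF w j] by (simp add: psi_Suc)
qed

lemma psi_degen:
  assumes w: "w \<in> cell G (Suc m)" and j: "1 \<le> j" "j \<le> Suc m"
  shows "psi G (Suc (Suc m)) j (degen G (Suc m) j w) = degen G (Suc m) j w"
proof -
  let ?d = "degen G (Suc m) j w"
  have d: "?d \<in> cell G (Suc (Suc m))" using w j by simp
  have "conn G (Suc m) j a (face G (Suc (Suc m)) (Suc j) b ?d) = degen G (Suc m) (Suc j) (face G (Suc (Suc m)) (Suc j) b ?d)"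
    for a b
    using w j by (simp add: face_degen_Suc conn_degen_same)
  then show ?thesis
    using d j by (simp add: psi_Suc comp_degen_left comp_degen_right)
qed

lemma psi_conn:
  assumes w: "w \<in> cell G (Suc m)" and j: "1 \<le> j" "j \<le> Suc m"
  shows "psi G (Suc (Suc m)) j (conn G (Suc m) j True w) = degen G (Suc m) j w"
proof -
  let ?g = "conn G (Suc m) j True w"
  have g: "?g \<in> cell G (Suc (Suc m))" using w j by simp
  have "conn G (Suc m) j True (face G (Suc (Suc m)) (Suc j) False ?g) = degen G (Suc m) (Suc j) (face G (Suc (Suc m)) (Suc j) False ?g)"
    using w j by (simp add: face_conn_Suc conn_degen_same)
  then show ?thesis
    using g w j conn_cancel[OF w j] by (simp add: psi_Suc comp_degen_left)
qed

lemma face_psi_conn_Suc: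
  assumes c: "c \<in> cell G (Suc (Suc p))" and j: "1 \<le> j" "j \<le> Suc p"
  shows "face G (Suc (Suc (Suc p))) (Suc (Suc j)) a (psi G (Suc (Suc (Suc p))) j (conn G (Suc (Suc p)) (Suc j) b c)) =
    (if a = b then psi G (Suc (Suc p)) j c else degen G (Suc p) j (face G (Suc (Suc p)) (Suc j) a c))"
  using c j face_psi_above[of "conn G (Suc (Suc p)) (Suc j) b c" "Suc p" j "Suc (Suc j)" a]
    psi_degen_Suc[of "face G (Suc (Suc p)) (Suc j) a c" p j]
  by (cases "a = b") (simp_all add: face_conn_Suc)

section \<open>The braid relation\<close>

definition psi_left :: "nat \<Rightarrow> nat \<Rightarrow> 'a \<Rightarrow> 'a" where
  "psi_left n j u = comp G n (Suc j) (conn G (n - 1) j True (face G n (Suc j) False u)) u"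

definition conn_pair :: "nat \<Rightarrow> nat \<Rightarrow> 'a \<Rightarrow> 'a" where
  "conn_pair n j v = comp G (Suc n) (Suc j) (conn G n (Suc j) True v) (conn G n j False v)"

lemma psi_eq_psi_left:
  "psi G (Suc n) j x = comp G (Suc n) (Suc j) (psi_left (Suc n) j x) (conn G n j False (face G (Suc n) (Suc j) True x))"
  by (simp add: psi_Suc psi_left_def)

lemma psi_left_degen_source:
  assumes u: "u \<in> cell G (Suc (Suc p))" and j: "1 \<le> j" "j \<le> Suc p" and g: "g \<in> cell G p"
    and u_source: "face G (Suc (Suc p)) (Suc j) False u = degen G p j g"
  shows "psi_left (Suc (Suc p)) j u = u"
proof -
  have "conn G (Suc p) j True (face G (Suc (Suc p)) (Suc j) False u) =
      degen G (Suc p) (Suc j) (face G (Suc (Suc p)) (Suc j) False u)"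
    unfolding u_source using g j by (simp add: conn_degen_same)
  then show ?thesis
    using u j by (simp add: psi_left_def comp_degen_left)
qed

lemma psi_conn_Suc:
  assumes v: "v \<in> cell G (Suc (Suc p))" and j: "1 \<le> j" "j \<le> Suc p"
  shows "psi G (Suc (Suc (Suc p))) j (conn G (Suc (Suc p)) (Suc j) True v) =
    comp G (Suc (Suc (Suc p))) (Suc j)
      (degen G (Suc (Suc p)) (Suc (Suc j)) (conn G (Suc p) j True (face G (Suc (Suc p)) (Suc j) False v)))
      (conn_pair (Suc (Suc p)) j v)"
proof -
  let ?e = "face G (Suc (Suc p)) (Suc j) False v"
  have source: "face G (Suc (Suc (Suc p))) (Suc j) False (conn G (Suc (Suc p)) (Suc j) True v) = degen G (Suc p) (Suc j) ?e"
    using v j by (simp add: cubical_simps)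
  have "conn G (Suc (Suc p)) j True (degen G (Suc p) (Suc j) ?e) = degen G (Suc (Suc p)) (Suc (Suc j)) (conn G (Suc p) j True ?e)"
    using conn_degen[of ?e "Suc p" j "Suc j" True] v j by simp
  then show ?thesis
    unfolding psi_Suc source conn_pair_def using v j
    by (simp add: comp_assoc cubical_simps)
qed

lemma psi_degen_comp_conn:
  assumes uv: "composable G (Suc (Suc p)) (Suc j) u v" and j: "1 \<le> j" "j \<le> Suc p"
  shows "psi G (Suc (Suc (Suc p))) j
      (comp G (Suc (Suc (Suc p))) (Suc j) (degen G (Suc (Suc p)) (Suc (Suc j)) u) (conn G (Suc (Suc p)) (Suc j) True v)) =
    comp G (Suc (Suc (Suc p))) (Suc j) (degen G (Suc (Suc p)) (Suc (Suc j)) (psi_left (Suc (Suc p)) j u)) (conn_pair (Suc (Suc p)) j v)"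
proof -
  let ?M = "Suc (Suc p)" let ?N = "Suc ?M"
  have u: "u \<in> cell G ?M" and v: "v \<in> cell G ?M" and uv_face: "face G ?M (Suc j) True u = face G ?M (Suc j) False v"
    using uv by (auto simp: composable_def)
  define D where "D = degen G ?M (Suc (Suc j)) u"
  define C where "C = conn G ?M (Suc j) True v"
  define X where "X = comp G ?N (Suc j) D C"
  define z where "z = conn G (Suc p) j True (face G ?M (Suc j) False u)"
  have DC: "composable G ?N (Suc j) D C"
    unfolding D_def C_def using u v j uv_face by (simp add: cubical_simps)
  have zD: "composable G ?N (Suc j) (degen G ?M (Suc (Suc j)) z) D"
    unfolding z_def D_def using u j by (simp add: cubical_simps)
  have C_conn: "composable G ?N (Suc j) C (conn G ?M j False v)"
    unfolding C_def using v j by (simp add: cubical_simps)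
  have zu: "composable G ?M (Suc j) z u"
    unfolding z_def using u j by (simp add: cubical_simps)
  have X_source: "face G ?N (Suc j) False X = degen G (Suc p) (Suc j) (face G ?M (Suc j) False u)"
    using DC u j unfolding X_def D_def by (simp add: cubical_simps)
  have X_target: "face G ?N (Suc j) True X = v"
    using DC v j unfolding X_def C_def by simp
  have conn_X_source: "conn G ?M j True (face G ?N (Suc j) False X) = degen G ?M (Suc (Suc j)) z"
    unfolding X_source z_def using conn_degen[of "face G ?M (Suc j) False u" "Suc p" j "Suc j" True] u j by simp
  have "psi G ?N j X = comp G ?N (Suc j) (comp G ?N (Suc j) (degen G ?M (Suc (Suc j)) z) X) (conn G ?M j False v)"
    unfolding psi_Suc conn_X_source X_target ..
  also have "\<dots> = comp G ?N (Suc j) (comp G ?N (Suc j) (degen G ?M (Suc (Suc j)) z) D) (comp G ?N (Suc j) C (conn G ?M j False v))"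
    unfolding X_def using comp_assoc[OF zD DC] comp_assoc[OF composable_comp_left[OF zD DC] C_conn] by simp
  also have "comp G ?N (Suc j) (degen G ?M (Suc (Suc j)) z) D = degen G ?M (Suc (Suc j)) (psi_left ?M j u)"
    unfolding psi_left_def D_def z_def using degen_comp[OF zu[unfolded z_def], of "Suc (Suc j)"] j by simp
  finally show ?thesis unfolding X_def D_def C_def conn_pair_def .
qed

lemma psi_conn_Suc_comp:
  assumes uv: "composable G (Suc (Suc p)) (Suc j) u v" and j: "1 \<le> j" "j \<le> Suc p"
  shows "psi G (Suc (Suc (Suc p))) j (conn G (Suc (Suc p)) (Suc j) True (comp G (Suc (Suc p)) (Suc j) u v)) =
    comp G (Suc (Suc (Suc p))) (Suc (Suc j)) (psi G (Suc (Suc (Suc p))) j (conn G (Suc (Suc p)) (Suc j) True u))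
      (comp G (Suc (Suc (Suc p))) (Suc j) (degen G (Suc (Suc p)) (Suc (Suc j)) (psi_left (Suc (Suc p)) j u))
        (conn_pair (Suc (Suc p)) j v))"
proof -
  let ?M = "Suc (Suc p)" let ?N = "Suc ?M"
  have u: "u \<in> cell G ?M" and v: "v \<in> cell G ?M" and uv_face: "face G ?M (Suc j) True u = face G ?M (Suc j) False v"
    using uv by (auto simp: composable_def)
  define X where "X = comp G ?N (Suc j) (degen G ?M (Suc (Suc j)) u) (conn G ?M (Suc j) True v)"
  have "comp G ?N (Suc j) (conn G ?M (Suc j) True u) (degen G ?M (Suc j) u) = conn G ?M (Suc j) True u"
    by (rule comp_degen_right) (use u j in \<open>simp_all add: cubical_simps\<close>)
  then have conn_uv: "conn G ?M (Suc j) True (comp G ?M (Suc j) u v) = comp G ?N (Suc (Suc j)) (conn G ?M (Suc j) True u) X"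
    using conn_comp_same[OF uv] unfolding X_def by simp
  have "comp G ?M (Suc j) u (degen G (Suc p) (Suc j) (face G ?M (Suc j) False v)) = u"
    by (rule comp_degen_right[OF u]) (use j uv_face in simp_all)
  then have "composable G ?N (Suc (Suc j)) (conn G ?M (Suc j) True u) X"
    using u v j uv_face unfolding X_def by (simp add: cubical_simps)
  from psi_comp_above[OF this j(1) le_refl] show ?thesis
    unfolding conn_uv X_def psi_degen_comp_conn[OF uv j] .
qed

lemma psi_left_idem:
  assumes c: "c \<in> cell G (Suc (Suc p))" and j: "1 \<le> j" "j \<le> Suc p"
  shows "psi_left (Suc (Suc p)) j (psi_left (Suc (Suc p)) j c) = psi_left (Suc (Suc p)) j c"
proof (rule psi_left_degen_source)
  show "face G (Suc (Suc p)) (Suc j) False (psi_left (Suc (Suc p)) j c) =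
      degen G p j (face G (Suc p) j False (face G (Suc (Suc p)) (Suc j) False c))"
    using c j by (simp add: psi_left_def cubical_simps)
qed (use c j in \<open>simp_all add: psi_left_def cubical_simps\<close>)

lemma psi_psi_left:
  assumes c: "c \<in> cell G (Suc (Suc p))" and j: "1 \<le> j" "j \<le> Suc p"
  shows "psi G (Suc (Suc p)) j (psi_left (Suc (Suc p)) j c) = psi G (Suc (Suc p)) j c"
proof -
  have "face G (Suc (Suc p)) (Suc j) True (psi_left (Suc (Suc p)) j c) = face G (Suc (Suc p)) (Suc j) True c"
    using c j by (simp add: psi_left_def cubical_simps)
  then show ?thesis
    unfolding psi_eq_psi_left psi_left_idem[OF c j] by simp
qed

lemma conn_pair_conn:
  assumes f: "f \<in> cell G (Suc p)" and j: "1 \<le> j" "j \<le> Suc p"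
  shows "conn_pair (Suc (Suc p)) j (conn G (Suc p) j False f) =
    degen G (Suc (Suc p)) (Suc (Suc j)) (conn G (Suc p) j False f)"
  using conn_conn_same[OF f j(1), of False] conn_cancel[of "conn G (Suc p) j False f" "Suc (Suc p)" "Suc j"] f j
  by (simp add: conn_pair_def)

(* psi_j c = psi_left c o_(j+1) w with w a Gamma^- cell, and the contribution of w in
   psi_conn_Suc_comp is an identity for o_(j+2). *)
lemma psi_conn_Suc_psi_eq_psi_left:
  assumes c: "c \<in> cell G (Suc (Suc p))" and j: "1 \<le> j" "j \<le> Suc p"
  shows "psi G (Suc (Suc (Suc p))) j (conn G (Suc (Suc p)) (Suc j) True (psi G (Suc (Suc p)) j c)) =
    psi G (Suc (Suc (Suc p))) j (conn G (Suc (Suc p)) (Suc j) True (psi_left (Suc (Suc p)) j c))"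
proof -
  let ?M = "Suc (Suc p)" let ?N = "Suc ?M"
  define L where "L = psi_left ?M j c"
  define w where "w = conn G (Suc p) j False (face G ?M (Suc j) True c)"
  have Lw: "composable G ?M (Suc j) L w"
    using c j unfolding L_def w_def by (simp add: psi_left_def cubical_simps)
  have L: "L \<in> cell G ?M" using Lw by (simp add: composable_def)
  have f: "face G ?M (Suc j) True c \<in> cell G (Suc p)" using c j by simp
  have psi_c: "psi G ?M j c = comp G ?M (Suc j) L w"
    unfolding L_def w_def by (rule psi_eq_psi_left)
  have "psi G ?N j (conn G ?M (Suc j) True (psi G ?M j c)) = comp G ?N (Suc (Suc j))
      (psi G ?N j (conn G ?M (Suc j) True L))
      (comp G ?N (Suc j) (degen G ?M (Suc (Suc j)) (psi_left ?M j L)) (conn_pair ?M j w))"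
    unfolding psi_c by (rule psi_conn_Suc_comp[OF Lw j])
  also have "comp G ?N (Suc j) (degen G ?M (Suc (Suc j)) (psi_left ?M j L)) (conn_pair ?M j w) =
      degen G ?M (Suc (Suc j)) (psi G ?M j c)"
    using degen_comp[OF Lw, of "Suc (Suc j)"] conn_pair_conn[OF f j] psi_left_idem[OF c j] j
    unfolding psi_c L_def w_def by simp
  also have "comp G ?N (Suc (Suc j)) (psi G ?N j (conn G ?M (Suc j) True L)) \<dots> =
      psi G ?N j (conn G ?M (Suc j) True L)"
    by (rule comp_degen_right)
      (use L j psi_psi_left[OF c j] face_psi_conn_Suc[OF L j, of True True] in \<open>simp_all add: L_def\<close>)
  finally show ?thesis unfolding L_def .
qed

lemma psi_conn_Suc_psi_left:
  assumes c: "c \<in> cell G (Suc (Suc p))" and j: "1 \<le> j" "j \<le> Suc p"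
  shows "psi G (Suc (Suc (Suc p))) j (conn G (Suc (Suc p)) (Suc j) True (psi_left (Suc (Suc p)) j c)) =
    comp G (Suc (Suc (Suc p))) (Suc (Suc j))
      (degen G (Suc (Suc p)) j (conn G (Suc p) j True (face G (Suc (Suc p)) (Suc j) False c)))
      (psi G (Suc (Suc (Suc p))) j (conn G (Suc (Suc p)) (Suc j) True c))"
proof -
  let ?M = "Suc (Suc p)" let ?N = "Suc ?M"
  define e where "e = face G ?M (Suc j) False c"
  have e: "e \<in> cell G (Suc p)" using c j by (simp add: e_def)
  have ec: "composable G ?M (Suc j) (conn G (Suc p) j True e) c"
    using c j e by (simp add: cubical_simps e_def)
  have psi_left_conn: "psi_left ?M j (conn G (Suc p) j True e) = conn G (Suc p) j True e"
    by (rule psi_left_degen_source[of _ p j "face G (Suc p) j False e"]) (use e j in \<open>simp_all add: cubical_simps\<close>)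
  have psi_conn_conn: "psi G ?N j (conn G ?M (Suc j) True (conn G (Suc p) j True e)) = degen G ?M j (conn G (Suc p) j True e)"
    using conn_conn_same[OF e j(1), of True] psi_conn[of "conn G (Suc p) j True e" "Suc p" j] e j by simp
  show ?thesis
    using psi_conn_Suc_comp[OF ec j] psi_conn_Suc[OF c j]
    unfolding psi_left_conn psi_conn_conn e_def[symmetric]
    by (simp add: psi_left_def e_def)
qed

lemma psi_conn_Suc_psi:
  assumes c: "c \<in> cell G (Suc (Suc p))" and j: "1 \<le> j" "j \<le> Suc p"
  shows "psi G (Suc (Suc (Suc p))) j (conn G (Suc (Suc p)) (Suc j) True (psi G (Suc (Suc p)) j c)) =
    comp G (Suc (Suc (Suc p))) (Suc (Suc j))
      (degen G (Suc (Suc p)) j (conn G (Suc p) j True (face G (Suc (Suc p)) (Suc j) False c)))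
      (psi G (Suc (Suc (Suc p))) j (conn G (Suc (Suc p)) (Suc j) True c))"
  unfolding psi_conn_Suc_psi_eq_psi_left[OF c j] psi_conn_Suc_psi_left[OF c j] ..

lemma psi_dual:
  "x \<in> cell G (Suc n) \<Longrightarrow> 1 \<le> i \<Longrightarrow> i \<le> n \<Longrightarrow> psi (dual G) (Suc n) i x = psi G (Suc n) i x"
  by (simp add: psi_def cubical_simps comp_assoc)

lemma psi_conn_Suc_psi_dual:
  assumes c: "c \<in> cell G (Suc (Suc p))" and j: "1 \<le> j" "j \<le> Suc p"
  shows "psi G (Suc (Suc (Suc p))) j (conn G (Suc (Suc p)) (Suc j) False (psi G (Suc (Suc p)) j c)) =
    comp G (Suc (Suc (Suc p))) (Suc (Suc j))
      (psi G (Suc (Suc (Suc p))) j (conn G (Suc (Suc p)) (Suc j) False c))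
      (degen G (Suc (Suc p)) j (conn G (Suc p) j False (face G (Suc (Suc p)) (Suc j) True c)))"
proof -
  interpret dual: cubical_cat "dual G" by (rule cubical_cat_dual)
  show ?thesis
    using dual.psi_conn_Suc_psi[OF _ j] c j by (simp add: psi_dual cubical_simps)
qed

lemma psi_psi_Suc:
  assumes x: "x \<in> cell G (Suc (Suc (Suc p)))" and j: "1 \<le> j" "j \<le> Suc p"
  shows "psi G (Suc (Suc (Suc p))) j (psi G (Suc (Suc (Suc p))) (Suc j) x) =
    comp G (Suc (Suc (Suc p))) (Suc (Suc j))
      (comp G (Suc (Suc (Suc p))) (Suc (Suc j))
        (psi G (Suc (Suc (Suc p))) j (conn G (Suc (Suc p)) (Suc j) True (face G (Suc (Suc (Suc p))) (Suc (Suc j)) False x)))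
        (psi G (Suc (Suc (Suc p))) j x))
      (psi G (Suc (Suc (Suc p))) j (conn G (Suc (Suc p)) (Suc j) False (face G (Suc (Suc (Suc p))) (Suc (Suc j)) True x)))"
proof -
  let ?M = "Suc (Suc p)" let ?N = "Suc ?M"
  define c where "c = face G ?N (Suc (Suc j)) False x"
  define d where "d = face G ?N (Suc (Suc j)) True x"
  have cx: "composable G ?N (Suc (Suc j)) (conn G ?M (Suc j) True c) x"
    using x j by (simp add: cubical_simps c_def)
  have cxd: "composable G ?N (Suc (Suc j)) (comp G ?N (Suc (Suc j)) (conn G ?M (Suc j) True c) x) (conn G ?M (Suc j) False d)"
    using cx x j by (simp add: cubical_simps c_def d_def)
  show ?thesis
    unfolding psi_Suc[of _ "Suc j"] c_def[symmetric] d_def[symmetric]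
      psi_comp_above[OF cxd j(1) le_refl] psi_comp_above[OF cx j(1) le_refl] ..
qed

lemma psi_psi_Suc_degen_faces:
  assumes y: "y \<in> cell G (Suc (Suc (Suc p)))" and j: "1 \<le> j" "j \<le> Suc p"
    and fixed: "psi G (Suc (Suc (Suc p))) j y = y"
    and e: "e \<in> cell G (Suc p)" "e' \<in> cell G (Suc p)"
    and source: "face G (Suc (Suc (Suc p))) (Suc (Suc j)) False y = degen G (Suc p) j e"
    and target: "face G (Suc (Suc (Suc p))) (Suc (Suc j)) True y = degen G (Suc p) j e'"
  shows "psi G (Suc (Suc (Suc p))) j (psi G (Suc (Suc (Suc p))) (Suc j) y) =
    comp G (Suc (Suc (Suc p))) (Suc (Suc j))
      (comp G (Suc (Suc (Suc p))) (Suc (Suc j)) (degen G (Suc (Suc p)) j (conn G (Suc p) j True e)) y)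
      (degen G (Suc (Suc p)) j (conn G (Suc p) j False e'))"
proof -
  let ?M = "Suc (Suc p)" let ?N = "Suc ?M"
  define P where "P = degen G ?M j (conn G (Suc p) j True e)"
  define Q where "Q = degen G ?M j (conn G (Suc p) j False e')"
  have conn_source: "conn G ?M (Suc j) True (degen G (Suc p) j e) = P"
    unfolding P_def using conn_degen[OF e(1), of "Suc j" j True] j by simp
  have conn_target: "conn G ?M (Suc j) False (degen G (Suc p) j e') = Q"
    unfolding Q_def using conn_degen[OF e(2), of "Suc j" j False] j by simp
  have Py: "composable G ?N (Suc (Suc j)) P y"
    using y source e j unfolding conn_source[symmetric] by (simp add: cubical_simps)
  have PyQ: "composable G ?N (Suc (Suc j)) (comp G ?N (Suc (Suc j)) P y) Q"
    using Py y target e j unfolding conn_source[symmetric] conn_target[symmetric] by (simp add: cubical_simps)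
  have "psi G ?N j P = P" "psi G ?N j Q = Q"
    unfolding P_def Q_def using psi_degen e j by simp_all
  moreover have "psi G ?N (Suc j) y = comp G ?N (Suc (Suc j)) (comp G ?N (Suc (Suc j)) P y) Q"
    unfolding psi_Suc[of _ "Suc j"] source target conn_source conn_target ..
  ultimately show ?thesis
    unfolding P_def[symmetric] Q_def[symmetric]
    using psi_comp_above[OF PyQ j(1) le_refl] psi_comp_above[OF Py j(1) le_refl] fixed by simp
qed

lemma psi_psi_Suc_twice:
  assumes x: "x \<in> cell G (Suc (Suc (Suc p)))" and j: "1 \<le> j" "j \<le> Suc p"
  defines "Y \<equiv> psi G (Suc (Suc (Suc p))) j (psi G (Suc (Suc (Suc p))) (Suc j) x)"
    and "e a \<equiv> face G (Suc (Suc p)) (Suc j) a (face G (Suc (Suc (Suc p))) (Suc (Suc j)) a x)"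
  shows "psi G (Suc (Suc (Suc p))) j (psi G (Suc (Suc (Suc p))) (Suc j) Y) =
    comp G (Suc (Suc (Suc p))) (Suc (Suc j))
      (comp G (Suc (Suc (Suc p))) (Suc (Suc j)) (degen G (Suc (Suc p)) j (conn G (Suc p) j True (e False))) Y)
      (degen G (Suc (Suc p)) j (conn G (Suc p) j False (e True)))"
proof (rule psi_psi_Suc_degen_faces)
  have "e a \<in> cell G (Suc p)" for a
    using x j unfolding e_def by simp
  moreover have "face G (Suc (Suc (Suc p))) (Suc (Suc j)) a Y = degen G (Suc p) j (e a)" for a
    using x j face_psi_above[of "psi G (Suc (Suc (Suc p))) (Suc j) x" "Suc p" j "Suc (Suc j)" a]
      face_psi_Suc[OF x, of "Suc j" a] psi_degen_Suc[of "e a" p j]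
    unfolding Y_def e_def by simp
  ultimately show "e False \<in> cell G (Suc p)" "e True \<in> cell G (Suc p)"
    "face G (Suc (Suc (Suc p))) (Suc (Suc j)) False Y = degen G (Suc p) j (e False)"
    "face G (Suc (Suc (Suc p))) (Suc (Suc j)) True Y = degen G (Suc p) j (e True)"
    by simp_all
qed (use x j psi_idem[of "psi G (Suc (Suc (Suc p))) (Suc j) x" "Suc (Suc (Suc p))" j] in \<open>simp_all add: Y_def\<close>)

(* Both sides are the composite P o A o psi_j x o B o Q in direction j + 2. *)
lemma psi_braid:
  assumes x: "x \<in> cell G n" and j: "1 \<le> j" "Suc j < n"
  shows "psi G n j (psi G n (Suc j) (psi G n j (psi G n (Suc j) x))) = psi G n j (psi G n (Suc j) (psi G n j x))"
proof -
  define p where "p = n - 3"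
  have n: "n = Suc (Suc (Suc p))" and jp: "j \<le> Suc p" using j by (simp_all add: p_def)
  let ?M = "Suc (Suc p)" let ?N = "Suc ?M"
  have x': "x \<in> cell G ?N" using x n by simp
  define c where "c = face G ?N (Suc (Suc j)) False x"
  define d where "d = face G ?N (Suc (Suc j)) True x"
  define e where "e = face G ?M (Suc j) False c"
  define e' where "e' = face G ?M (Suc j) True d"
  define X where "X = psi G ?N j x"
  define A where "A = psi G ?N j (conn G ?M (Suc j) True c)"
  define B where "B = psi G ?N j (conn G ?M (Suc j) False d)"
  define P where "P = degen G ?M j (conn G (Suc p) j True e)"
  define Q where "Q = degen G ?M j (conn G (Suc p) j False e')"
  have cd: "c \<in> cell G ?M" "d \<in> cell G ?M" using x' j jp by (simp_all add: c_def d_def)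
  have ee: "e \<in> cell G (Suc p)" "e' \<in> cell G (Suc p)" using cd j jp by (simp_all add: e_def e'_def)
  have X: "X \<in> cell G ?N" and X_fixed: "psi G ?N j X = X"
    using x' j jp psi_idem[OF x', of j] by (simp_all add: X_def)
  have X_face: "face G ?N (Suc (Suc j)) a X = psi G ?M j (face G ?N (Suc (Suc j)) a x)" for a
    unfolding X_def using face_psi_above[OF x', of j "Suc (Suc j)" a] j jp by simp
  have PA: "composable G ?N (Suc (Suc j)) P A" and BQ: "composable G ?N (Suc (Suc j)) B Q"
    using cd ee j jp by (simp_all add: cubical_simps A_def B_def P_def Q_def e_def e'_def face_psi_conn_Suc)
  have AX: "composable G ?N (Suc (Suc j)) A X" and XB: "composable G ?N (Suc (Suc j)) X B"
    using cd X X_face j jp by (simp_all add: A_def B_def c_def d_def face_psi_conn_Suc composable_def)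
  define Y where "Y = psi G ?N j (psi G ?N (Suc j) x)"
  have Y: "Y = comp G ?N (Suc (Suc j)) (comp G ?N (Suc (Suc j)) A X) B"
    unfolding Y_def psi_psi_Suc[OF x' j(1) jp] A_def B_def X_def c_def d_def ..
  have "psi G ?N j (psi G ?N (Suc j) Y) = comp G ?N (Suc (Suc j)) (comp G ?N (Suc (Suc j)) P Y) Q"
    using psi_psi_Suc_twice[OF x' j(1) jp] unfolding Y_def P_def Q_def e_def e'_def c_def d_def .
  moreover have "psi G ?N j (psi G ?N (Suc j) X) =
      comp G ?N (Suc (Suc j)) (comp G ?N (Suc (Suc j)) (comp G ?N (Suc (Suc j)) P A) X) (comp G ?N (Suc (Suc j)) B Q)"
    using psi_psi_Suc[OF X j(1) jp] psi_conn_Suc_psi[OF cd(1) j(1) jp] psi_conn_Suc_psi_dual[OF cd(2) j(1) jp]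
    unfolding X_face X_fixed by (simp add: A_def B_def P_def Q_def e_def e'_def c_def d_def)
  ultimately show ?thesis
    unfolding n Y_def[symmetric] X_def[symmetric] Y
    using PA AX XB BQ by (simp add: comp_assoc composable_comp_left composable_comp_right)
qed

section \<open>Absorption of folding operations by Phi\<close>

(* psi_chain n a b = psi_(b-1) ... psi_a, with psi_a applied first; thus Psi_r = psi_chain n 1 r. *)
fun psi_chain :: "nat \<Rightarrow> nat \<Rightarrow> nat \<Rightarrow> 'a \<Rightarrow> 'a" where
  "psi_chain n a 0 x = x"
| "psi_chain n a (Suc b) x = (if b < a then x else psi G n b (psi_chain n a b x))"

lemma Psi_eq_psi_chain: "Psi G n r x = psi_chain n 1 r x"
  by (induction r) auto

lemma psi_chain_cell: "x \<in> cell G n \<Longrightarrow> 1 \<le> a \<Longrightarrow> b \<le> n \<Longrightarrow> psi_chain n a b x \<in> cell G n"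
  by (induction b) auto

lemma psi_chain_split: "a \<le> b \<Longrightarrow> b \<le> c \<Longrightarrow> psi_chain n a c x = psi_chain n b c (psi_chain n a b x)"
  by (induction c) (auto simp: le_Suc_eq)

lemma psi_chain_psi_commute:
  assumes "x \<in> cell G n" "1 \<le> a" "1 \<le> i" "i < n" "b \<le> n"
    and "\<And>k. a \<le> k \<Longrightarrow> k < b \<Longrightarrow> Suc (Suc i) \<le> k \<or> Suc (Suc k) \<le> i"
  shows "psi_chain n a b (psi G n i x) = psi G n i (psi_chain n a b x)"
  using assms
proof (induction b)
  case (Suc b)
  have y: "psi_chain n a b x \<in> cell G n" using Suc.prems by (simp add: psi_chain_cell)
  show ?case
  proof (cases "b < a")
    case False
    then have "Suc (Suc i) \<le> b \<or> Suc (Suc b) \<le> i" using Suc.prems(6) by simp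
    then have "psi G n b (psi G n i (psi_chain n a b x)) = psi G n i (psi G n b (psi_chain n a b x))"
    proof
      assume "Suc (Suc i) \<le> b"
      then show ?thesis using psi_commute[OF y, of i b] Suc.prems by simp
    next
      assume "Suc (Suc b) \<le> i"
      then show ?thesis using psi_commute[OF y, of b i] Suc.prems False by simp
    qed
    with False Suc show ?thesis by simp
  qed simp
qed simp

lemma Phi_Suc: "Phi G n (Suc m) x = Phi G n m (psi_chain n 1 (Suc m) x)"
  by (simp add: Psi_eq_psi_chain)

lemma Phi_Suc_psi_1:
  assumes x: "x \<in> cell G n" and m: "1 \<le> m" "Suc m \<le> n"
  shows "Phi G n (Suc m) (psi G n 1 x) = Phi G n (Suc m) x"
proof -
  have split: "psi_chain n 1 (Suc m) y = psi_chain n 2 (Suc m) (psi G n 1 y)" for y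
    using psi_chain_split[of 1 2 "Suc m" n y] m by (simp add: numeral_2_eq_2)
  have "psi G n 1 (psi G n 1 x) = psi G n 1 x"
    using psi_idem[OF x] m by simp
  then have "psi_chain n 1 (Suc m) (psi G n 1 x) = psi_chain n 1 (Suc m) x"
    unfolding split by (rule arg_cong)
  then show ?thesis
    unfolding Phi_Suc by (rule arg_cong)
qed

lemma Phi_Suc_psi_Suc:
  assumes absorb_j: "\<And>y. y \<in> cell G n \<Longrightarrow> Phi G n m (psi G n j y) = Phi G n m y"
    and x: "x \<in> cell G n" and j: "1 \<le> j" "Suc j < Suc m" and m: "Suc m \<le> n"
  shows "Phi G n (Suc m) (psi G n (Suc j) x) = Phi G n (Suc m) x"
proof -
  let ?i = "Suc j"
  let ?rest = "psi_chain n (Suc ?i) (Suc m)"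
  have chain: "psi_chain n 1 (Suc m) y = ?rest (psi G n ?i (psi G n j (psi_chain n 1 j y)))" for y
    using psi_chain_split[of 1 "Suc ?i" "Suc m" n y] j by simp
  have absorb: "Phi G n m (?rest (psi G n j y)) = Phi G n m (?rest y)" if y: "y \<in> cell G n" for y
  proof -
    have "?rest (psi G n j y) = psi G n j (?rest y)"
      by (rule psi_chain_psi_commute) (use y j m in auto)
    then show ?thesis using absorb_j[of "?rest y"] y m by (simp add: psi_chain_cell)
  qed
  define z where "z = psi_chain n 1 j x"
  have z: "z \<in> cell G n" using x j m unfolding z_def by (simp add: psi_chain_cell)
  have "psi_chain n 1 j (psi G n ?i x) = psi G n ?i z"
    unfolding z_def by (rule psi_chain_psi_commute) (use x j m in auto)
  then have "Phi G n (Suc m) (psi G n ?i x) = Phi G n m (?rest (psi G n ?i (psi G n j (psi G n ?i z))))"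
    unfolding Phi_Suc chain by (rule arg_cong)
  also have "\<dots> = Phi G n m (?rest (psi G n j (psi G n ?i (psi G n j (psi G n ?i z)))))"
    by (rule absorb[symmetric]) (use z j m in simp)
  also have "\<dots> = Phi G n m (?rest (psi G n j (psi G n ?i (psi G n j z))))"
    using psi_braid[OF z j(1)] j m by simp
  also have "\<dots> = Phi G n m (?rest (psi G n ?i (psi G n j z)))"
    by (rule absorb) (use z j m in simp)
  also have "\<dots> = Phi G n (Suc m) x"
    unfolding Phi_Suc chain z_def ..
  finally show ?thesis .
qed

lemma Phi_psi:
  assumes "m \<le> n" "x \<in> cell G n" "1 \<le> i" "i < m"
  shows "Phi G n m (psi G n i x) = Phi G n m x"
  using assms
proof (induction m arbitrary: i x)
  case (Suc m)
  then obtain j where i: "i = Suc j" by (cases i) auto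
  show ?case
  proof (cases "j = 0")
    case True
    with Suc.prems i show ?thesis using Phi_Suc_psi_1[of x n m] by simp
  next
    case False
    with Suc.prems i show ?thesis using Phi_Suc_psi_Suc[of n m j x] Suc.IH by simp
  qed
qed simp

end

theorem theorem5p4:
  fixes G :: "'a cubcat" and n m i :: nat and x :: 'a
  assumes "cubical_omega_cat_conn G"
    and "m \<le> n" and "1 \<le> i" and "i \<le> m - 1"
    and "x \<in> cell G n"
  shows "Phi G n m (psi G n i x) = Phi G n m x"
proof -
  interpret cubical_cat G
    using assms(1) by (simp add: cubical_cat_iff)
  show ?thesis
    using Phi_psi assms by simp
qed

end
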